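(* In a network satisfying (H1) and (H2), let $V$ be an intermediate species, let $\widetilde Y$ be the enzyme of the connected component containing $V$, and let $Y$ be a non-intermediate species that is the enzyme of some connected component whose set of substrates/products equals $\mathscr{S}_V$. Let $X$ be a non-intermediate species with $X\in\mathscr{S}^{(\alpha)}$ for some $\alpha\ge1$ and $Y,\widetilde Y\notin\mathscr{S}^{(\alpha)}$. If a monomial $y^r v$ ($r\ge0$) appears in $x^{(\ell)}$ for some $\ell\ge1$, then $X\in\mathscr{S}_V$. Moreover, either $V$ reacts to $X$, or $r\ge1$, $\ell\ge2$, and a monomial $y^t v$ with $t<r$ appears in $z_w^{(i)}$ for some $i\le\ell-2$, for a species $Z_w$ involved in a block of reactions $Y+Z_w\rightleftarrows W\to Y+X$ (reactions $Y+Z_w\to W$, $W\to Y+Z_w$, $W\to Y+X$). In the latter case, if $\ell$ is the smallest positive integer such that some monomial $y^{r'}v$ ($r'\ge0$) appears in $x^{(\ell)}$, then $t=r-1$.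
   Context: Species are capital letters, concentrations lower-case letters. Mass-action system: $\dot{\mathbf{x}}=\sum_{y\to y'}k_{yy'}\mathbf{x}^y(y'-y)$, rates $k_{yy'}>0$. Total derivative: $\dot\varphi=\sum_i\frac{\partial\varphi}{\partial x_i}\dot x_i$ with $\dot x_i$ replaced by the right-hand side; $\varphi^{(\ell)}$ the $\ell$-th iterate ($\varphi^{(0)}=\varphi$); a monomial appears if its coefficient (a polynomial in rate constants) is nonzero. (H1) Every connected component has the form $Y+S_0\rightleftarrows U_1\to Y+S_1\rightleftarrows\cdots\rightleftarrows U_L\to Y+S_L$ (reactions $Y+S_{j-1}\to U_j$, $U_j\to Y+S_{j-1}$, $U_j\to Y+S_j$), unique enzyme $Y$; intermediates distinct throughout the network; non-intermediates of a component pairwise distinct but may appear in other components; each complex in a unique component. $\mathscr{S}_U$ = set of substrates/products of the component containing intermediate $U$. (H2) A partition $\mathscr{S}^{(0)}\sqcup\cdots\sqcup\mathscr{S}^{(M)}$ ($M\ge2$, nonempty, $\mathscr{S}^{(0)}$ the intermediates) with: for each intermediate $U$ with enzyme $Y$, some $\alpha\ge1$ has $\mathscr{S}_U\subseteq\mathscr{S}^{(\alpha)}$, $Y\notin\mathscr{S}^{(\alpha)}$. An intermediate $U$ reacts to a non-intermediate $X_1$ if there is a reaction $U\to X_1+X_2$ with $X_2$ non-intermediate. *)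

theory Defs
  imports Main "HOL-Library.Multiset" "HOL-Library.Poly_Mapping"
begin

text \<open>A connected component Y+S_0 <-> U_1 -> Y+S_1 <-> ... <-> U_L -> Y+S_L is given by a
triple (Y, [S_0,...,S_L], [U_1,...,U_L]).\<close>

type_synonym 's complex = "'s multiset"
type_synonym 's reaction = "'s complex \<times> 's complex"
type_synonym 's component = "'s \<times> 's list \<times> 's list"

fun comp_rxns :: "'s component \<Rightarrow> 's reaction set" where
  "comp_rxns (Y, Ss, Us) =
     (\<Union>j<length Us. {({#Y, Ss!j#}, {#Us!j#}), ({#Us!j#}, {#Y, Ss!j#}),
                      ({#Us!j#}, {#Y, Ss!(Suc j)#})})"

fun comp_cplx :: "'s component \<Rightarrow> 's complex set" where
  "comp_cplx (Y, Ss, Us) =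
     {{#Y, Ss!j#} | j. j \<le> length Us} \<union> {{#Us!j#} | j. j < length Us}"

fun comp_species :: "'s component \<Rightarrow> 's set" where
  "comp_species (Y, Ss, Us) = insert Y (set Ss \<union> set Us)"

fun comp_inter :: "'s component \<Rightarrow> 's set" where
  "comp_inter (Y, Ss, Us) = set Us"

definition rxns :: "'s component set \<Rightarrow> 's reaction set" where
  "rxns C = (\<Union>c\<in>C. comp_rxns c)"

definition species :: "'s component set \<Rightarrow> 's set" where
  "species C = (\<Union>c\<in>C. comp_species c)"

definition intermediates :: "'s component set \<Rightarrow> 's set" where
  "intermediates C = (\<Union>c\<in>C. comp_inter c)"

definition H1 :: "'s component set \<Rightarrow> bool" where
  "H1 C \<longleftrightarrow> finite C \<and>
     (\<forall>(Y, Ss, Us)\<in>C. Us \<noteq> [] \<and> length Ss = Suc (length Us) \<and> distinct (Y # Ss)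
        \<and> distinct Us \<and> Y \<notin> intermediates C \<and> set Ss \<inter> intermediates C = {}) \<and>
     (\<forall>c1\<in>C. \<forall>c2\<in>C. c1 \<noteq> c2 \<longrightarrow>
        comp_inter c1 \<inter> comp_inter c2 = {} \<and> comp_cplx c1 \<inter> comp_cplx c2 = {})"

definition H2 :: "'s component set \<Rightarrow> (nat \<Rightarrow> 's set) \<Rightarrow> nat \<Rightarrow> bool" where
  "H2 C P M \<longleftrightarrow> M \<ge> 2 \<and>
     (\<Union>\<alpha>\<in>{..M}. P \<alpha>) = species C \<and>
     (\<forall>\<alpha>\<le>M. P \<alpha> \<noteq> {}) \<and>
     (\<forall>\<alpha>\<le>M. \<forall>\<beta>\<le>M. \<alpha> \<noteq> \<beta> \<longrightarrow> P \<alpha> \<inter> P \<beta> = {}) \<and>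
     P 0 = intermediates C \<and>
     (\<forall>(Y, Ss, Us)\<in>C. \<forall>U\<in>set Us. \<exists>\<alpha>. 1 \<le> \<alpha> \<and> \<alpha> \<le> M \<and> set Ss \<subseteq> P \<alpha> \<and> Y \<notin> P \<alpha>)"

text \<open>Polynomials with integer coefficients in the variables x_s (concentrations, Xv s) and
k_r (rate constants, Kv r).\<close>

datatype 's var = Xv 's | Kv "'s reaction"
type_synonym 's monom = "'s var \<Rightarrow>\<^sub>0 nat"
type_synonym 's poly = "'s monom \<Rightarrow>\<^sub>0 int"

definition xmono :: "'s complex \<Rightarrow> 's monom" where
  "xmono y = (\<Sum>s\<in>set_mset y. Poly_Mapping.single (Xv s) (count y s))"

definition xvar :: "'s \<Rightarrow> 's poly" where
  "xvar s = Poly_Mapping.single (Poly_Mapping.single (Xv s) 1) 1"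

definition pdiff :: "'s var \<Rightarrow> 's poly \<Rightarrow> 's poly" where
  "pdiff v p = (\<Sum>m\<in>Poly_Mapping.keys p. Poly_Mapping.single (m - Poly_Mapping.single v (1::nat))
                     (Poly_Mapping.lookup p m * int (Poly_Mapping.lookup m v)))"

definition rhs :: "'s component set \<Rightarrow> 's \<Rightarrow> 's poly" where
  "rhs C s = (\<Sum>r\<in>rxns C. Poly_Mapping.single
                 (Poly_Mapping.single (Kv r) 1 + xmono (fst r))
                 (int (count (snd r) s) - int (count (fst r) s)))"

definition tder :: "'s component set \<Rightarrow> 's poly \<Rightarrow> 's poly" where
  "tder C \<phi> = (\<Sum>s\<in>species C. pdiff (Xv s) \<phi> * rhs C s)"

abbreviation iter_tder :: "'s component set \<Rightarrow> nat \<Rightarrow> 's poly \<Rightarrow> 's poly" where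
  "iter_tder C l \<equiv> tder C ^^ l"

text \<open>The monomial x^e (e an exponent vector on species) appears in p iff its coefficient,
a polynomial in the rate constants, is nonzero.\<close>
definition appears :: "('s \<Rightarrow> nat) \<Rightarrow> 's poly \<Rightarrow> bool" where
  "appears e p \<longleftrightarrow> (\<exists>m\<in>Poly_Mapping.keys p. \<forall>s. Poly_Mapping.lookup m (Xv s) = e s)"

definition yv_mono :: "'s \<Rightarrow> nat \<Rightarrow> 's \<Rightarrow> ('s \<Rightarrow> nat)" where
  "yv_mono Y r V = (\<lambda>s. if s = Y then r else if s = V then 1 else 0)"

definition reacts_to :: "'s component set \<Rightarrow> 's \<Rightarrow> 's \<Rightarrow> bool" where
  "reacts_to C U X1 \<longleftrightarrow>
     (\<exists>X2. X2 \<notin> intermediates C \<and> ({#U#}, {#X1, X2#}) \<in> rxns C)"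

end

theory Submission
  imports Defs
begin

text \<open>
Each total derivative of x_z is a sum, over the reactions changing z, of a rate constant times
the monomial of the source complex, and the Leibniz rule splits derivatives of a binary source
x_A x_B. Tracing a monomial y^r v of x_X^(l) backwards through these steps, the factor without v
is a pure power of the enzyme Y, and such monomials occur only in x_y itself; hence every binary
step consumes one factor y. So y^r v reaches the non-intermediate X either directly from V, via
V -> X + Yt, or from y^(r-1) v in a lower derivative of X, or through a block
Y + Z <-> W -> Y + X fed by y^(r-1) v in a lower derivative of Z. In the last case (H2) puts the
substrates of the block's component into the class of X, which excludes Y, so Y is its enzyme;
by induction on l, Z is a substrate of V's component and hence of Y's, and (H1) identifies the
block's component with that of Y. Only the implication from appearing to having such an origin
is used, so cancellations between terms never have to be excluded.
\<close>

section \<open>Total derivatives of polynomials\<close>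

lemma poly_mapping_single_induct [case_names zero single_add]:
  assumes "P 0" and "\<And>f a b. P f \<Longrightarrow> P (Poly_Mapping.single a b + f)"
  shows "P f"
proof (induction f rule: Poly_Mapping.update_induct)
  case const
  show ?case by (fact assms(1))
next
  case (update f a b)
  have "Poly_Mapping.update a b f = Poly_Mapping.single a b + f"
    using update(1)
    by (intro poly_mapping_eqI) (auto simp: lookup_update lookup_add lookup_single when_def in_keys_iff)
  with assms(2) update(3) show ?case by simp
qed

lemma pdiff_0 [simp]: "pdiff v 0 = 0"
  by (simp add: pdiff_def)

lemma pdiff_add: "pdiff v (p + q) = pdiff v p + pdiff v q"
  unfolding pdiff_def
  by (rule setsum_keys_plus_distrib) (simp_all add: distrib_right single_add)

lemma pdiff_single:
  "pdiff v (Poly_Mapping.single m c) =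
     Poly_Mapping.single (m - Poly_Mapping.single v 1) (c * int (Poly_Mapping.lookup m v))"
  by (cases "c = 0") (simp_all add: pdiff_def)

lemma pdiff_single_times_single:
  "pdiff v (Poly_Mapping.single m a) * Poly_Mapping.single n b =
     Poly_Mapping.single (m + n - Poly_Mapping.single v 1) (a * b * int (Poly_Mapping.lookup m v))"
proof (cases "Poly_Mapping.lookup m v = 0")
  case False
  then have "m - Poly_Mapping.single v 1 + n = m + n - Poly_Mapping.single v 1"
    by (intro poly_mapping_eqI) (auto simp: lookup_add lookup_minus lookup_single when_def)
  then show ?thesis by (simp add: pdiff_single mult_single ac_simps)
qed (simp add: pdiff_single)

lemma pdiff_single_mult_single:
  "pdiff v (Poly_Mapping.single m a * Poly_Mapping.single n b) =
     pdiff v (Poly_Mapping.single m a) * Poly_Mapping.single n b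
     + Poly_Mapping.single m a * pdiff v (Poly_Mapping.single n b)"
  using pdiff_single_times_single[of v m a n b] pdiff_single_times_single[of v n b m a]
  by (simp add: mult_single pdiff_single lookup_add algebra_simps single_add[symmetric]
      mult.commute[of "Poly_Mapping.single m a"] add.commute[of n m])

lemma pdiff_mult: "pdiff v (p * q) = pdiff v p * q + p * pdiff v q"
proof (induction p rule: poly_mapping_single_induct)
  case zero
  show ?case by simp
next
  case (single_add p m a)
  have "pdiff v (Poly_Mapping.single m a * q) =
          pdiff v (Poly_Mapping.single m a) * q + Poly_Mapping.single m a * pdiff v q"
    by (induction q rule: poly_mapping_single_induct)
      (simp_all add: distrib_left pdiff_add pdiff_single_mult_single)
  with single_add.IH show ?case by (simp add: distrib_right pdiff_add algebra_simps)
qed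

lemma tder_0 [simp]: "tder C 0 = 0"
  by (simp add: tder_def)

lemma tder_add: "tder C (p + q) = tder C p + tder C q"
  by (simp add: tder_def pdiff_add distrib_right sum.distrib)

lemma tder_mult: "tder C (p * q) = tder C p * q + p * tder C q"
  by (simp add: tder_def pdiff_mult algebra_simps sum.distrib sum_distrib_left sum_distrib_right)

lemma tder_single_const:
  assumes "\<And>s. Poly_Mapping.lookup m (Xv s) = 0"
  shows "tder C (Poly_Mapping.single m c) = 0"
  by (simp add: tder_def pdiff_single assms)

lemma tder_xvar:
  assumes "finite (species C)"
  shows "tder C (xvar z) = (if z \<in> species C then rhs C z else 0)"
proof -
  have "pdiff (Xv s) (xvar z) = (if s = z then 1 else 0)" for s
    by (auto simp: xvar_def pdiff_single lookup_single)
  then have "tder C (xvar z) = (\<Sum>s\<in>species C. if s = z then rhs C z else 0)"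
    unfolding tder_def by (intro sum.cong) auto
  with assms show ?thesis by simp
qed

lemma iter_tder_0 [simp]: "iter_tder C n 0 = 0"
  by (induction n) simp_all

lemma iter_tder_add: "iter_tder C n (p + q) = iter_tder C n p + iter_tder C n q"
  by (induction n) (simp_all add: tder_add)

lemma iter_tder_sum: "iter_tder C n (sum f A) = (\<Sum>a\<in>A. iter_tder C n (f a))"
  using sum_comp_morphism[of "iter_tder C n" f A] by (simp add: iter_tder_add o_def)

lemma iter_tder_single_const_mult:
  assumes "\<And>s. Poly_Mapping.lookup m (Xv s) = 0"
  shows "iter_tder C n (Poly_Mapping.single m c * p) = Poly_Mapping.single m c * iter_tder C n p"
  by (induction n) (simp_all add: tder_mult tder_single_const[OF assms])

lemma iter_tder_Suc_right: "iter_tder C (Suc n) p = iter_tder C n (tder C p)"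
  by (simp only: funpow_Suc_right o_def)

section \<open>Monomials of iterated total derivatives\<close>

lemma keys_iter_tder_mult:
  assumes "m \<in> Poly_Mapping.keys (iter_tder C n (p * q))"
  shows "\<exists>i j a b. i + j = n \<and> m = a + b \<and>
           a \<in> Poly_Mapping.keys (iter_tder C i p) \<and> b \<in> Poly_Mapping.keys (iter_tder C j q)"
  using assms
proof (induction n arbitrary: p q)
  case 0
  then show ?case using keys_mult[of p q] by auto
next
  case (Suc n)
  have "iter_tder C (Suc n) (p * q) = iter_tder C n (tder C p * q) + iter_tder C n (p * tder C q)"
    by (simp only: iter_tder_Suc_right tder_mult iter_tder_add)
  with Suc.prems consider
      "m \<in> Poly_Mapping.keys (iter_tder C n (tder C p * q))"
    | "m \<in> Poly_Mapping.keys (iter_tder C n (p * tder C q))"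
    using keys_add by fastforce
  then show ?case
  proof cases
    case 1
    from Suc.IH[OF 1] obtain i j a b where "i + j = n" "m = a + b"
      "a \<in> Poly_Mapping.keys (iter_tder C (Suc i) p)" "b \<in> Poly_Mapping.keys (iter_tder C j q)"
      unfolding iter_tder_Suc_right by blast
    then show ?thesis by (intro exI[of _ "Suc i"] exI[of _ j]) auto
  next
    case 2
    from Suc.IH[OF 2] obtain i j a b where "i + j = n" "m = a + b"
      "a \<in> Poly_Mapping.keys (iter_tder C i p)" "b \<in> Poly_Mapping.keys (iter_tder C (Suc j) q)"
      unfolding iter_tder_Suc_right by blast
    then show ?thesis by (intro exI[of _ i] exI[of _ "Suc j"]) auto
  qed
qed

lemma appears_iter_tder_mult:
  assumes "appears e (iter_tder C n (p * q))"
  shows "\<exists>i j e1 e2. i + j = n \<and> e = (\<lambda>s. e1 s + e2 s) \<and>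
           appears e1 (iter_tder C i p) \<and> appears e2 (iter_tder C j q)"
proof -
  from assms obtain m where m: "m \<in> Poly_Mapping.keys (iter_tder C n (p * q))"
    "\<And>s. Poly_Mapping.lookup m (Xv s) = e s"
    unfolding appears_def by blast
  from keys_iter_tder_mult[OF m(1)] obtain i j a b where "i + j = n" "m = a + b"
    "a \<in> Poly_Mapping.keys (iter_tder C i p)" "b \<in> Poly_Mapping.keys (iter_tder C j q)"
    by blast
  moreover from m(2) \<open>m = a + b\<close>
  have "e = (\<lambda>s. Poly_Mapping.lookup a (Xv s) + Poly_Mapping.lookup b (Xv s))"
    by (auto simp: lookup_add)
  ultimately show ?thesis
    unfolding appears_def
    by (intro exI[of _ i] exI[of _ j] exI[of _ "\<lambda>s. Poly_Mapping.lookup a (Xv s)"]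
        exI[of _ "\<lambda>s. Poly_Mapping.lookup b (Xv s)"]) auto
qed

lemma not_appears_0 [simp]: "\<not> appears e 0"
  by (simp add: appears_def)

lemma appears_xvar: "appears e (xvar z) \<longleftrightarrow> e = (\<lambda>s. if s = z then 1 else 0)"
  by (auto simp: appears_def xvar_def lookup_single when_def)

lemma appears_sum: "appears e (sum f A) \<Longrightarrow> \<exists>a\<in>A. appears e (f a)"
  unfolding appears_def using keys_sum[of f A] by blast

lemma appears_single_const_mult:
  assumes "\<And>s. Poly_Mapping.lookup k (Xv s) = 0" and "appears e (Poly_Mapping.single k c * p)"
  shows "appears e p"
proof -
  from assms(2) obtain m where m: "m \<in> Poly_Mapping.keys (Poly_Mapping.single k c * p)"
    "\<And>s. Poly_Mapping.lookup m (Xv s) = e s"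
    unfolding appears_def by blast
  then obtain b where "m = k + b" "b \<in> Poly_Mapping.keys p"
    using keys_mult[of "Poly_Mapping.single k c" p] by (auto split: if_splits)
  with m(2) assms(1) show ?thesis
    unfolding appears_def by (auto simp: lookup_add)
qed

lemma single_xmono_singleton: "Poly_Mapping.single (xmono {#U#}) 1 = xvar U"
  by (simp add: xmono_def xvar_def)

lemma single_xmono_pair: "Poly_Mapping.single (xmono {#A, B#}) 1 = xvar A * xvar B"
  by (cases "A = B") (simp_all add: xmono_def xvar_def mult_single single_add[symmetric])

lemma appears_iter_tder_Suc_xvar:
  assumes "finite (species C)" and "appears e (iter_tder C (Suc n) (xvar z))"
  obtains \<rho> where "\<rho> \<in> rxns C" "count (snd \<rho>) z \<noteq> count (fst \<rho>) z"
    "appears e (iter_tder C n (Poly_Mapping.single (xmono (fst \<rho>)) 1))"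
proof -
  define k where "k \<rho> = Poly_Mapping.single (Kv \<rho>) (1::nat)" for \<rho> :: "'a reaction"
  define c where "c \<rho> = int (count (snd \<rho>) z) - int (count (fst \<rho>) z)" for \<rho> :: "'a reaction"
  have k_const: "Poly_Mapping.lookup (k \<rho>) (Xv s) = 0" for \<rho> s
    by (simp add: k_def lookup_single)
  have z: "z \<in> species C"
  proof (rule ccontr)
    assume "z \<notin> species C"
    then have "iter_tder C (Suc n) (xvar z) = 0"
      by (simp only: iter_tder_Suc_right tder_xvar[OF assms(1)] if_False iter_tder_0)
    with assms(2) show False by simp
  qed
  have "iter_tder C (Suc n) (xvar z) = iter_tder C n (rhs C z)"
    by (simp only: iter_tder_Suc_right tder_xvar[OF assms(1)] if_P[OF z])
  also have "\<dots> = (\<Sum>\<rho>\<in>rxns C. iter_tder C n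
                     (Poly_Mapping.single (k \<rho>) (c \<rho>) * Poly_Mapping.single (xmono (fst \<rho>)) 1))"
    by (simp add: rhs_def k_def c_def mult_single iter_tder_sum)
  also have "\<dots> = (\<Sum>\<rho>\<in>rxns C. Poly_Mapping.single (k \<rho>) (c \<rho>) *
                     iter_tder C n (Poly_Mapping.single (xmono (fst \<rho>)) 1))"
    by (simp add: iter_tder_single_const_mult k_const)
  finally obtain \<rho> where \<rho>: "\<rho> \<in> rxns C" and
    "appears e (Poly_Mapping.single (k \<rho>) (c \<rho>) * iter_tder C n (Poly_Mapping.single (xmono (fst \<rho>)) 1))"
    using appears_sum assms(2) by force
  moreover from this(2) have "c \<rho> \<noteq> 0" by auto
  ultimately show ?thesis
    using that appears_single_const_mult[OF k_const] by (auto simp: c_def)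
qed

abbreviation yv_appears :: "'s component set \<Rightarrow> 's \<Rightarrow> 's \<Rightarrow> nat \<Rightarrow> nat \<Rightarrow> 's \<Rightarrow> bool" where
  "yv_appears C Y V r n z \<equiv> appears (yv_mono Y r V) (iter_tder C n (xvar z))"

lemma yv_appears_0:
  assumes "yv_appears C Y V r 0 z" "V \<noteq> Y"
  shows "z = V \<and> r = 0"
proof -
  from assms(1) have "yv_mono Y r V = (\<lambda>s. if s = z then 1 else 0)"
    by (simp add: appears_xvar)
  from fun_cong[OF this, of V] fun_cong[OF this, of Y] assms(2) show ?thesis
    by (simp add: yv_mono_def split: if_splits)
qed

section \<open>Networks satisfying (H1) and (H2)\<close>

lemma rxns_cases:
  assumes "\<rho> \<in> rxns C"
  obtains E Ss Us j where "(E, Ss, Us) \<in> C" "j < length Us"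
    "\<rho> = ({#E, Ss!j#}, {#Us!j#}) \<or> \<rho> = ({#Us!j#}, {#E, Ss!j#}) \<or> \<rho> = ({#Us!j#}, {#E, Ss!Suc j#})"
  using assms by (force simp: rxns_def)

lemma
  assumes "(E, Ss, Us) \<in> C" "j < length Us"
  shows binding_in_rxns: "({#E, Ss!j#}, {#Us!j#}) \<in> rxns C"
    and unbinding_in_rxns: "({#Us!j#}, {#E, Ss!j#}) \<in> rxns C"
  using assms by (auto simp: rxns_def intro!: bexI[of _ "(E, Ss, Us)"])

lemma intermediates_nth:
  "(E, Ss, Us) \<in> C \<Longrightarrow> j < length Us \<Longrightarrow> Us!j \<in> intermediates C"
  by (auto simp: intermediates_def intro!: bexI[of _ "(E, Ss, Us)"])

lemma reaction_with_singleton_source: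
  assumes "\<rho> \<in> rxns C" "fst \<rho> = {#U#}"
  obtains E Ss Us j k where "(E, Ss, Us) \<in> C" "j < length Us" "U = Us!j"
    "snd \<rho> = {#E, Ss!k#}" "k = j \<or> k = Suc j"
  using assms by (elim rxns_cases) auto

lemma reaction_with_pair_source:
  assumes "\<rho> \<in> rxns C" "fst \<rho> = {#A, B#}"
  obtains E Ss Us j where "(E, Ss, Us) \<in> C" "j < length Us"
    "{#A, B#} = {#E, Ss!j#}" "snd \<rho> = {#Us!j#}"
  using assms by (elim rxns_cases) auto

lemma add_mset_pair_eq_iff:
  "{#a, b#} = {#c, d#} \<longleftrightarrow> (a = c \<and> b = d) \<or> (a = d \<and> b = c)"
  by (auto simp: add_eq_conv_ex)

lemma H2_component_class:
  assumes "H2 C P M" "(E, Ss, Us) \<in> C" "j < length Us"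
  obtains \<beta> where "\<beta> \<le> M" "set Ss \<subseteq> P \<beta>"
proof -
  have "\<forall>(E, Ss, Us)\<in>C. \<forall>U\<in>set Us. \<exists>\<beta>. 1 \<le> \<beta> \<and> \<beta> \<le> M \<and> set Ss \<subseteq> P \<beta> \<and> E \<notin> P \<beta>"
    using assms(1) unfolding H2_def by (elim conjE)
  with assms(2,3) that show thesis
    by (fastforce dest!: nth_mem)
qed

lemma H2_class_unique:
  assumes "H2 C P M" "\<alpha> \<le> M" "\<beta> \<le> M" "x \<in> P \<alpha>" "x \<in> P \<beta>"
  shows "\<alpha> = \<beta>"
proof -
  have "\<forall>\<alpha>\<le>M. \<forall>\<beta>\<le>M. \<alpha> \<noteq> \<beta> \<longrightarrow> P \<alpha> \<inter> P \<beta> = {}"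
    using assms(1) unfolding H2_def by (elim conjE)
  with assms(2-5) show ?thesis by blast
qed

definition catalytic_block :: "'s component set \<Rightarrow> 's \<Rightarrow> 's \<Rightarrow> 's \<Rightarrow> 's \<Rightarrow> bool" where
  "catalytic_block C Y Z W X \<longleftrightarrow>
     ({#Y, Z#}, {#W#}) \<in> rxns C \<and> ({#W#}, {#Y, Z#}) \<in> rxns C \<and> ({#W#}, {#Y, X#}) \<in> rxns C"

context
  fixes C :: "'s component set"
  assumes h1: "H1 C"
begin

lemma finite_species: "finite (species C)"
proof -
  have "finite (comp_species c)" for c :: "'s component"
    by (cases c) simp
  with h1 show ?thesis by (simp add: H1_def species_def)
qed

lemma component_wf:
  assumes "(E, Ss, Us) \<in> C"
  shows "length Ss = Suc (length Us)" "distinct (E # Ss)" "distinct Us"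
    "E \<notin> intermediates C" "set Ss \<inter> intermediates C = {}"
proof -
  have "\<forall>(E, Ss, Us)\<in>C. Us \<noteq> [] \<and> length Ss = Suc (length Us) \<and> distinct (E # Ss)
          \<and> distinct Us \<and> E \<notin> intermediates C \<and> set Ss \<inter> intermediates C = {}"
    using h1 unfolding H1_def by (elim conjE)
  with assms show "length Ss = Suc (length Us)" "distinct (E # Ss)" "distinct Us"
    "E \<notin> intermediates C" "set Ss \<inter> intermediates C = {}"
    by fast+
qed

lemma substrate_not_intermediate:
  assumes "(E, Ss, Us) \<in> C" "k \<le> length Us"
  shows "Ss!k \<notin> intermediates C"
  using component_wf[OF assms(1)] assms(2) by (metis disjoint_iff le_imp_less_Suc nth_mem)

lemma components_disjoint:
  assumes "c \<in> C" "c' \<in> C" "c \<noteq> c'"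
  shows "comp_inter c \<inter> comp_inter c' = {}" "comp_cplx c \<inter> comp_cplx c' = {}"
proof -
  have "\<forall>c\<in>C. \<forall>c'\<in>C. c \<noteq> c' \<longrightarrow>
          comp_inter c \<inter> comp_inter c' = {} \<and> comp_cplx c \<inter> comp_cplx c' = {}"
    using h1 unfolding H1_def by (elim conjE)
  with assms show "comp_inter c \<inter> comp_inter c' = {}" "comp_cplx c \<inter> comp_cplx c' = {}"
    by blast+
qed

lemma component_eq_if_shared_intermediate:
  assumes "(E, Ss, Us) \<in> C" "(E', Ss', Us') \<in> C" "U \<in> set Us" "U \<in> set Us'"
  shows "(E, Ss, Us) = (E', Ss', Us')"
  using components_disjoint(1)[OF assms(1,2)] assms(3,4) by auto

lemma component_eq_if_shared_substrate:
  assumes "(E, Ss, Us) \<in> C" "(E, Ss', Us') \<in> C" "S \<in> set Ss" "S \<in> set Ss'"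
  shows "(Ss, Us) = (Ss', Us')"
proof -
  obtain j j' where j: "j \<le> length Us" "Ss!j = S" and j': "j' \<le> length Us'" "Ss'!j' = S"
    using assms(3,4) component_wf(1)[OF assms(1)] component_wf(1)[OF assms(2)]
    by (metis in_set_conv_nth less_Suc_eq_le)
  have "{#E, S#} \<in> comp_cplx (E, Ss, Us)"
    unfolding comp_cplx.simps using j by (intro UnI1 CollectI exI[of _ j]) simp
  moreover have "{#E, S#} \<in> comp_cplx (E, Ss', Us')"
    unfolding comp_cplx.simps using j' by (intro UnI1 CollectI exI[of _ j']) simp
  ultimately show ?thesis
    using components_disjoint(2)[OF assms(1,2)] by blast
qed

lemma reaction_changing_intermediate:
  assumes "\<rho> \<in> rxns C" "(E, Ss, Us) \<in> C" "j < length Us"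
    and "count (snd \<rho>) (Us!j) \<noteq> count (fst \<rho>) (Us!j)"
  shows "fst \<rho> = {#Us!j#} \<or> \<rho> = ({#E, Ss!j#}, {#Us!j#})"
  using assms(1)
proof (rule rxns_cases)
  fix E' Ss' Us' j'
  assume c': "(E', Ss', Us') \<in> C" "j' < length Us'" and
    \<rho>: "\<rho> = ({#E', Ss'!j'#}, {#Us'!j'#}) \<or> \<rho> = ({#Us'!j'#}, {#E', Ss'!j'#})
         \<or> \<rho> = ({#Us'!j'#}, {#E', Ss'!Suc j'#})"
  have U: "Us!j \<in> intermediates C" using assms(2,3) by (rule intermediates_nth)
  then have "E' \<noteq> Us!j" "Ss'!j' \<noteq> Us!j" "Ss'!Suc j' \<noteq> Us!j"
    using component_wf(4)[OF c'(1)] substrate_not_intermediate[OF c'(1)] c'(2)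
    by (metis Suc_leI less_imp_le)+
  then have "Us'!j' = Us!j"
    using \<rho> assms(4) by (auto split: if_splits)
  with \<rho> show ?thesis
  proof (elim disjE)
    assume "\<rho> = ({#E', Ss'!j'#}, {#Us'!j'#})" and jj: "Us'!j' = Us!j"
    have "(E', Ss', Us') = (E, Ss, Us)"
      using component_eq_if_shared_intermediate[OF c'(1) assms(2)] c'(2) assms(3) jj
      by (metis nth_mem)
    moreover from this have "j' = j"
      using component_wf(3)[OF assms(2)] c'(2) assms(3) jj by (simp add: nth_eq_iff_index_eq)
    ultimately show ?thesis using \<open>\<rho> = _\<close> by simp
  qed auto
qed

lemma reaction_source_cases:
  assumes "\<rho> \<in> rxns C"
  obtains (unimolecular) U where "fst \<rho> = {#U#}" "U \<in> intermediates C"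
    | (bimolecular) A B where "fst \<rho> = {#A, B#}" "A \<noteq> B"
  using assms
proof (rule rxns_cases)
  fix E Ss Us j
  assume c: "(E, Ss, Us) \<in> C" "j < length Us" and
    "\<rho> = ({#E, Ss!j#}, {#Us!j#}) \<or> \<rho> = ({#Us!j#}, {#E, Ss!j#}) \<or> \<rho> = ({#Us!j#}, {#E, Ss!Suc j#})"
  moreover have "E \<noteq> Ss!j"
    using component_wf(1,2)[OF c(1)] c(2) by auto
  ultimately show thesis
    using that intermediates_nth[OF c] by auto
qed

section \<open>Tracing the monomials y^r v\<close>

context
  fixes Y :: 's
  assumes Y_not_intermediate: "Y \<notin> intermediates C"
begin

lemma pure_enzyme_monomial_origin:
  assumes "appears e (iter_tder C n (xvar z))" "\<And>s. s \<noteq> Y \<Longrightarrow> e s = 0"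
  shows "n = 0 \<and> z = Y"
  using assms
proof (induction n arbitrary: z e rule: less_induct)
  case (less n)
  show ?case
  proof (cases n)
    case 0
    with less.prems(1) have "e z = 1"
      by (simp add: appears_xvar)
    with less.prems(2) 0 show ?thesis by force
  next
    case (Suc n')
    obtain \<rho> where \<rho>: "\<rho> \<in> rxns C"
      "appears e (iter_tder C n' (Poly_Mapping.single (xmono (fst \<rho>)) 1))"
      using appears_iter_tder_Suc_xvar[OF finite_species less.prems(1)[unfolded Suc]]
      by blast
    from \<rho>(1) show ?thesis
    proof (cases rule: reaction_source_cases)
      case (unimolecular U)
      with \<rho>(2) less.IH[of n' e U] less.prems(2) Suc have "U = Y"
        by (simp add: single_xmono_singleton)
      with unimolecular(2) Y_not_intermediate show ?thesis by simp
    next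
      case (bimolecular A B)
      with \<rho>(2) obtain i j e1 e2 where ij: "i + j = n'" "e = (\<lambda>s. e1 s + e2 s)"
        "appears e1 (iter_tder C i (xvar A))" "appears e2 (iter_tder C j (xvar B))"
        by (auto simp: single_xmono_pair dest: appears_iter_tder_mult)
      with less.prems(2) have "\<And>s. s \<noteq> Y \<Longrightarrow> e1 s = 0" "\<And>s. s \<noteq> Y \<Longrightarrow> e2 s = 0"
        by (metis add_is_0)+
      with ij less.IH[of i e1 A] less.IH[of j e2 B] Suc have "A = Y" "B = Y"
        by simp_all
      with bimolecular(2) show ?thesis by simp
    qed
  qed
qed

context
  fixes V :: 's
  assumes V_ne_Y: "V \<noteq> Y"
begin

lemma enzyme_factor_of_yv_mono:
  assumes "yv_mono Y r V = (\<lambda>s. e1 s + e2 s)" "e2 V = 0" "appears e2 (iter_tder C j (xvar B))"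
  shows "j = 0 \<and> B = Y \<and> 1 \<le> r \<and> e1 = yv_mono Y (r - 1) V"
proof -
  have "e2 s = 0" if "s \<noteq> Y" for s
    using fun_cong[OF assms(1), of s] assms(2) that by (auto simp: yv_mono_def split: if_splits)
  with assms(3) have jB: "j = 0 \<and> B = Y"
    by (rule pure_enzyme_monomial_origin)
  with assms(3) have "e2 = (\<lambda>s. if s = Y then 1 else 0)"
    by (simp add: appears_xvar)
  with assms(1) have e: "yv_mono Y r V s = e1 s + (if s = Y then 1 else 0)" for s
    by (simp add: fun_eq_iff)
  from e[of Y] have r: "r = Suc (e1 Y)"
    by (simp add: yv_mono_def)
  have "e1 = yv_mono Y (r - 1) V"
  proof
    fix s
    show "e1 s = yv_mono Y (r - 1) V s"
      using e[of s] r V_ne_Y by (auto simp: yv_mono_def)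
  qed
  with jB r show ?thesis by simp
qed

lemma yv_appears_mult_xvar:
  assumes "appears (yv_mono Y r V) (iter_tder C n (xvar A * xvar B))"
  shows "1 \<le> r \<and> (A = Y \<and> yv_appears C Y V (r - 1) n B \<or> B = Y \<and> yv_appears C Y V (r - 1) n A)"
proof -
  from appears_iter_tder_mult[OF assms] obtain i j e1 e2 where ij: "i + j = n"
    "yv_mono Y r V = (\<lambda>s. e1 s + e2 s)"
    "appears e1 (iter_tder C i (xvar A))" "appears e2 (iter_tder C j (xvar B))"
    by blast
  from fun_cong[OF ij(2), of V] V_ne_Y have "e1 V + e2 V = 1"
    by (simp add: yv_mono_def)
  then consider "e2 V = 0" | "e1 V = 0" by linarith
  then show ?thesis
  proof cases
    case 1
    from enzyme_factor_of_yv_mono[OF ij(2) this ij(4)] ij(1,3) show ?thesis by simp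
  next
    case 2
    from ij(2) have "yv_mono Y r V = (\<lambda>s. e2 s + e1 s)"
      by (simp add: add.commute)
    from enzyme_factor_of_yv_mono[OF this 2 ij(3)] ij(1,4) show ?thesis by simp
  qed
qed

lemma yv_appears_Suc_cases:
  assumes "yv_appears C Y V r (Suc n) z"
  obtains (unimolecular) \<rho> U where "\<rho> \<in> rxns C" "count (snd \<rho>) z \<noteq> count (fst \<rho>) z"
      "fst \<rho> = {#U#}" "yv_appears C Y V r n U"
    | (bimolecular) \<rho> B where "\<rho> \<in> rxns C" "count (snd \<rho>) z \<noteq> count (fst \<rho>) z"
      "fst \<rho> = {#Y, B#}" "1 \<le> r" "yv_appears C Y V (r - 1) n B"
proof -
  obtain \<rho> where \<rho>: "\<rho> \<in> rxns C" "count (snd \<rho>) z \<noteq> count (fst \<rho>) z"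
    "appears (yv_mono Y r V) (iter_tder C n (Poly_Mapping.single (xmono (fst \<rho>)) 1))"
    using appears_iter_tder_Suc_xvar[OF finite_species assms] by blast
  from \<rho>(1) show thesis
  proof (cases rule: reaction_source_cases)
    case (unimolecular U)
    with \<rho> show thesis
      using that(1) by (simp add: single_xmono_singleton)
  next
    case (bimolecular A B)
    with \<rho>(3) yv_appears_mult_xvar[of r n A B] have "1 \<le> r"
      "A = Y \<and> yv_appears C Y V (r - 1) n B \<or> B = Y \<and> yv_appears C Y V (r - 1) n A"
      by (simp_all add: single_xmono_pair)
    then show thesis
    proof (elim conjE disjE)
      assume "A = Y" "yv_appears C Y V (r - 1) n B"
      with \<rho>(1,2) bimolecular(1) \<open>1 \<le> r\<close> show thesis by (intro that(2)) simp_all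
    next
      assume "B = Y" "yv_appears C Y V (r - 1) n A"
      with \<rho>(1,2) bimolecular(1) \<open>1 \<le> r\<close> show thesis
        by (intro that(2)) (simp_all add: add_mset_commute)
    qed
  qed
qed

lemma yv_appears_intermediate:
  assumes "(E, Ss, Us) \<in> C" "j < length Us" "yv_appears C Y V r n (Us!j)"
  shows "Us!j = V \<and> r = 0 \<or>
    1 \<le> r \<and> (\<exists>B m. m < n \<and> {#Y, B#} = {#E, Ss!j#} \<and> yv_appears C Y V (r - 1) m B)"
  using assms(3)
proof (induction n arbitrary: r)
  case 0
  from yv_appears_0[OF this V_ne_Y] show ?case by simp
next
  case (Suc n)
  from Suc.prems show ?case
  proof (cases rule: yv_appears_Suc_cases)
    case (unimolecular \<rho> U)
    from reaction_changing_intermediate[OF unimolecular(1) assms(1,2) unimolecular(2)]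
      unimolecular(3) have "U = Us!j"
      by auto
    with unimolecular(4) Suc.IH show ?thesis
      using less_Suc_eq by blast
  next
    case (bimolecular \<rho> B)
    from reaction_changing_intermediate[OF bimolecular(1) assms(1,2) bimolecular(2)]
      bimolecular(3) have "{#Y, B#} = {#E, Ss!j#}"
      by auto
    with bimolecular(4,5) show ?thesis by blast
  qed
qed

context
  fixes P :: "nat \<Rightarrow> 's set" and M :: nat and Yt :: 's and Ss Us :: "'s list" and \<alpha> :: nat
  assumes h2: "H2 C P M"
    and V_component: "(Yt, Ss, Us) \<in> C" "V \<in> set Us"
    and alpha: "\<alpha> \<le> M" "Y \<notin> P \<alpha>" "Yt \<notin> P \<alpha>"
begin

lemma V_intermediate: "V \<in> intermediates C"
  using V_component by (metis in_set_conv_nth intermediates_nth)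

lemma enzyme_binding_substrate_class:
  assumes "(E, Ss', Us') \<in> C" "j < length Us'" "k \<le> length Us'" "Ss'!k \<in> P \<alpha>"
    and "{#Y, B#} = {#E, Ss'!j#}"
  shows "E = Y" "B = Ss'!j" "Ss'!j \<in> P \<alpha>"
proof -
  have len: "length Ss' = Suc (length Us')" using component_wf(1)[OF assms(1)] .
  obtain \<beta> where \<beta>: "\<beta> \<le> M" "set Ss' \<subseteq> P \<beta>"
    using H2_component_class[OF h2 assms(1,2)] .
  with assms(3,4) len have "\<beta> = \<alpha>"
    using H2_class_unique[OF h2 alpha(1) \<beta>(1)] by (metis le_imp_less_Suc nth_mem subsetD)
  with \<beta>(2) assms(2) len show "Ss'!j \<in> P \<alpha>"
    by (metis less_SucI nth_mem subsetD)
  with alpha(2) assms(5) show "E = Y" "B = Ss'!j"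
    by (auto simp: add_mset_pair_eq_iff)
qed

lemma yv_appears_nonintermediate_Suc_cases:
  assumes X: "X \<notin> intermediates C" "X \<in> P \<alpha>" and app: "yv_appears C Y V r (Suc n) X"
  obtains (direct) "X \<in> set Ss" "reacts_to C V X"
    | (delayed) m where "1 \<le> r" "m \<le> n" "yv_appears C Y V (r - 1) m X"
    | (catalysed) Ss' Us' Zw W m where "(Y, Ss', Us') \<in> C" "Zw \<in> set Ss'" "X \<in> set Ss'"
        "Zw \<notin> intermediates C" "Zw \<in> P \<alpha>" "1 \<le> r" "m < n"
        "catalytic_block C Y Zw W X" "yv_appears C Y V (r - 1) m Zw"
proof -
  have X_ne_Y: "X \<noteq> Y" using X(2) alpha(2) by auto
  from app show thesis
  proof (cases rule: yv_appears_Suc_cases)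
    case (bimolecular \<rho> B)
    then obtain E' Ss' Us' j where "(E', Ss', Us') \<in> C" "j < length Us'" "snd \<rho> = {#Us'!j#}"
      by (elim reaction_with_pair_source)
    with X(1) intermediates_nth have "count (snd \<rho>) X = 0" by force
    with bimolecular(2,3) X_ne_Y have "B = X" by (auto split: if_splits)
    with bimolecular(4,5) show thesis by (intro delayed) auto
  next
    case (unimolecular \<rho> U)
    then obtain E Ss' Us' j k where c: "(E, Ss', Us') \<in> C" "j < length Us'" "U = Us'!j"
      and \<rho>: "snd \<rho> = {#E, Ss'!k#}" and k: "k = j \<or> k = Suc j"
      by (elim reaction_with_singleton_source)
    have len: "length Ss' = Suc (length Us')" using component_wf(1)[OF c(1)] .
    have k_le: "k \<le> length Us'" using k c(2) by auto
    have "count (fst \<rho>) X = 0"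
      using unimolecular(3) c X(1) intermediates_nth by fastforce
    with unimolecular(2) \<rho> have X_cases: "X = E \<or> X = Ss'!k" by (auto split: if_splits)
    from yv_appears_intermediate[OF c(1,2)] unimolecular(4) c(3)
    consider (V) "Us'!j = V" | (bound) B m where "1 \<le> r" "m < n" "{#Y, B#} = {#E, Ss'!j#}"
        "yv_appears C Y V (r - 1) m B"
      by blast
    then show thesis
    proof cases
      case V
      with c(2) V_component have "(E, Ss', Us') = (Yt, Ss, Us)"
        by (metis component_eq_if_shared_intermediate[OF c(1)] nth_mem)
      moreover from this X(2) alpha(3) X_cases have "X = Ss!k" by auto
      ultimately have "X \<in> set Ss" "\<rho> = ({#V#}, {#X, Yt#})"
        using k_le len unimolecular(3) c(3) V \<rho> by (auto simp: add_mset_commute prod_eq_iff)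
      with unimolecular(1) component_wf(4)[OF V_component(1)] show thesis
        by (intro direct) (auto simp: reacts_to_def)
    next
      case bound
      show thesis
      proof (cases "X = E")
        case True
        with bound(3) X_ne_Y have "B = X" by (auto simp: add_mset_pair_eq_iff)
        with bound show thesis by (intro delayed[of m]) auto
      next
        case False
        with X_cases have X_k: "X = Ss'!k" by simp
        with enzyme_binding_substrate_class[OF c(1,2) k_le _ bound(3)] X(2)
        have E: "E = Y" and B: "B = Ss'!j" and Zw: "Ss'!j \<in> P \<alpha>"
          by simp_all
        have "catalytic_block C Y (Ss'!j) (Us'!j) X"
          unfolding catalytic_block_def
          using binding_in_rxns[OF c(1,2)] unbinding_in_rxns[OF c(1,2)] unimolecular(1,3) c(3) \<rho> X_k E
          by (metis prod.collapse)
        moreover have "Ss'!j \<notin> intermediates C"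
          using substrate_not_intermediate[OF c(1)] c(2) by simp
        ultimately show thesis
          using c E X_k k_le len Zw bound B
          by (intro catalysed[where Zw = "Ss'!j" and W = "Us'!j" and m = m]) (auto intro: nth_mem)
      qed
    qed
  qed
qed

lemma yv_appears_nonintermediate:
  assumes Y_component: "(Y, Ss2, Us2) \<in> C" "set Ss2 = set Ss"
  shows "X \<notin> intermediates C \<Longrightarrow> X \<in> P \<alpha> \<Longrightarrow> 1 \<le> l \<Longrightarrow> yv_appears C Y V r l X \<Longrightarrow>
    X \<in> set Ss \<and>
    (reacts_to C V X \<or>
     (1 \<le> r \<and> 2 \<le> l \<and>
      (\<exists>t i Zw W. t < r \<and> i \<le> l - 2 \<and> catalytic_block C Y Zw W X \<and>
         yv_appears C Y V t i Zw \<and>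
         ((\<forall>l' r'. 1 \<le> l' \<and> l' < l \<longrightarrow> \<not> yv_appears C Y V r' l' X) \<longrightarrow> t = r - 1))))"
proof (induction l arbitrary: X r rule: less_induct)
  case (less l)
  then obtain n where l: "l = Suc n" by (cases l) auto
  have level_pos: "1 \<le> m" if "yv_appears C Y V r' m Z" "Z \<notin> intermediates C" for r' m Z
    using yv_appears_0[OF _ V_ne_Y] V_intermediate that by (cases m) auto
  from less.prems(1,2,4)[unfolded l] show ?case
  proof (cases rule: yv_appears_nonintermediate_Suc_cases)
    case direct
    then show ?thesis by simp
  next
    case (delayed m)
    with level_pos less.prems(1) have m: "1 \<le> m" "m < l" by (auto simp: l)
    with delayed(3) have not_first: "\<not> (\<forall>l' r'. 1 \<le> l' \<and> l' < l \<longrightarrow> \<not> yv_appears C Y V r' l' X)"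
      by blast
    from less.IH[OF m(2) less.prems(1,2) m(1) delayed(3)] have X_in: "X \<in> set Ss" and
      "reacts_to C V X \<or> 2 \<le> m \<and> (\<exists>t i Zw W. t < r - 1 \<and> i \<le> m - 2 \<and>
         catalytic_block C Y Zw W X \<and> yv_appears C Y V t i Zw)"
      by blast+
    then show ?thesis
    proof (elim disjE exE conjE)
      fix t i Zw W
      assume "2 \<le> m" "t < r - 1" "i \<le> m - 2" "catalytic_block C Y Zw W X" "yv_appears C Y V t i Zw"
      moreover from this m delayed(1) have "t < r" "i \<le> l - 2" "2 \<le> l" by auto
      ultimately show ?thesis using X_in delayed(1) not_first by blast
    qed (simp add: X_in)
  next
    case (catalysed Ss' Us' Zw W m)
    with level_pos have m: "1 \<le> m" "m < l" by (auto simp: l)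
    from less.IH[OF m(2) catalysed(4,5) m(1) catalysed(9)] Y_component(2)
    have "Zw \<in> set Ss2" by simp
    with component_eq_if_shared_substrate[OF catalysed(1) Y_component(1) catalysed(2)]
      catalysed(3) Y_component(2) have "X \<in> set Ss" by simp
    moreover have "r - 1 < r" "m \<le> l - 2" "2 \<le> l" using catalysed(6,7) m(1) l by auto
    ultimately show ?thesis using catalysed(6,8,9) by blast
  qed
qed

end

end

end

end

theorem mainTheorem13:
  fixes C :: "'s component set" and P :: "nat \<Rightarrow> 's set" and M :: nat
    and V Yt Y X :: 's and Ss Us :: "'s list" and r l :: nat and \<alpha> :: nat
  assumes h1: "H1 C" and h2: "H2 C P M"
    and compV: "(Yt, Ss, Us) \<in> C" "V \<in> set Us"
    and Y_enz: "Y \<notin> intermediates C" "\<exists>Ss' Us'. (Y, Ss', Us') \<in> C \<and> set Ss' = set Ss"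
    and X_nonint: "X \<notin> intermediates C"
    and alpha: "1 \<le> \<alpha>" "\<alpha> \<le> M" "X \<in> P \<alpha>" "Y \<notin> P \<alpha>" "Yt \<notin> P \<alpha>"
    and l_pos: "1 \<le> l"
    and app: "appears (yv_mono Y r V) (iter_tder C l (xvar X))"
  shows "X \<in> set Ss \<and>
    (reacts_to C V X \<or>
     (1 \<le> r \<and> 2 \<le> l \<and>
      (\<exists>t i Zw W. t < r \<and> i \<le> l - 2 \<and>
         ({#Y, Zw#}, {#W#}) \<in> rxns C \<and> ({#W#}, {#Y, Zw#}) \<in> rxns C \<and>
         ({#W#}, {#Y, X#}) \<in> rxns C \<and>
         appears (yv_mono Y t V) (iter_tder C i (xvar Zw)) \<and>
         ((\<forall>l' r'. 1 \<le> l' \<and> l' < l \<longrightarrow>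
             \<not> appears (yv_mono Y r' V) (iter_tder C l' (xvar X))) \<longrightarrow> t = r - 1))))"
proof -
  have V_ne_Y: "V \<noteq> Y"
    using compV Y_enz(1) by (metis in_set_conv_nth intermediates_nth)
  from Y_enz(2) obtain Ss2 Us2 where Y_component: "(Y, Ss2, Us2) \<in> C" "set Ss2 = set Ss"
    by blast
  from yv_appears_nonintermediate[OF h1 Y_enz(1) V_ne_Y h2 compV alpha(2,4,5) Y_component
      X_nonint alpha(3) l_pos app]
  show ?thesis unfolding catalytic_block_def conj_assoc .
qed

end
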